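(* Let $\delta$ be a metric on $[a,b]$, let $f:[a,b]\to\mathbb{R}^d$ be Borel measurable and let $g:[a,b]\to\mathbb{R}^d$ satisfy $\|g(t)-g(s)\|\le\mathsf{C}_g\,\delta(t,s)$ for all $s,t\in[a,b]$, for some constant $\mathsf{C}_g>0$. Then for every Borel set $E\subseteq[a,b]$, $$\dim_{\rho_\delta}(Gr_E(f+g))=\dim_{\rho_\delta}(Gr_E(f)).$$
   Context: $\rho_\delta((s,x),(t,y)):=\max\{\delta(s,t),\|x-y\|\}$ on $[a,b]\times\mathbb{R}^d$; for a metric $\rho$, $\mathcal{H}^\beta_\rho(G):=\lim_{\eta\to0}\inf\{\sum_n(2r_n)^\beta: G\subseteq\bigcup_n B_\rho(x_n,r_n),\ r_n\le\eta\}$ and $\dim_\rho(G):=\sup\{\beta>0:\mathcal{H}^\beta_\rho(G)>0\}$. $Gr_E(h):=\{(t,h(t)):t\in E\}$. In the paper $\delta$ is the canonical metric of a Gaussian process. *)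

theory Defs
  imports "HOL-Analysis.Analysis"
begin

definition metric_on :: "'a set \<Rightarrow> ('a \<Rightarrow> 'a \<Rightarrow> real) \<Rightarrow> bool" where
  "metric_on S \<delta> \<longleftrightarrow>
     (\<forall>s\<in>S. \<forall>t\<in>S. 0 \<le> \<delta> s t \<and> (\<delta> s t = 0 \<longleftrightarrow> s = t) \<and> \<delta> s t = \<delta> t s) \<and>
     (\<forall>s\<in>S. \<forall>t\<in>S. \<forall>u\<in>S. \<delta> s u \<le> \<delta> s t + \<delta> t u)"

definition rho_delta :: "(real \<Rightarrow> real \<Rightarrow> real) \<Rightarrow> real \<times> 'v::real_normed_vector \<Rightarrow> real \<times> 'v \<Rightarrow> real" where
  "rho_delta \<delta> p q = max (\<delta> (fst p) (fst q)) (norm (snd p - snd q))"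

definition rball :: "('a \<Rightarrow> 'a \<Rightarrow> real) \<Rightarrow> 'a \<Rightarrow> real \<Rightarrow> 'a set" where
  "rball \<rho> x r = {y. \<rho> x y < r}"

text \<open>The inner infimum is nonincreasing in eta, so the limit eta -> 0+ is the supremum over eta > 0.\<close>
definition hausdorff_measure ::
  "'a set \<Rightarrow> ('a \<Rightarrow> 'a \<Rightarrow> real) \<Rightarrow> real \<Rightarrow> 'a set \<Rightarrow> ennreal" where
  "hausdorff_measure X \<rho> \<beta> G =
     (SUP \<eta>\<in>{0<..}. INF c\<in>{(x, r). (\<forall>n. x n \<in> X \<and> 0 \<le> r n \<and> r n \<le> \<eta>) \<and>
                                     G \<subseteq> (\<Union>n. rball \<rho> (x n) (r n))}.
            (\<Sum>n. ennreal ((2 * snd c n) powr \<beta>)))"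

definition hausdorff_dim :: "'a set \<Rightarrow> ('a \<Rightarrow> 'a \<Rightarrow> real) \<Rightarrow> 'a set \<Rightarrow> ereal" where
  "hausdorff_dim X \<rho> G = Sup (ereal ` {\<beta>. \<beta> > 0 \<and> hausdorff_measure X \<rho> \<beta> G > 0})"

definition graph_on :: "'a set \<Rightarrow> ('a \<Rightarrow> 'b) \<Rightarrow> ('a \<times> 'b) set" where
  "graph_on E h = {(t, h t) | t. t \<in> E}"

end

theory Submission
  imports Defs
begin

text \<open>The shear (t, x) \<mapsto> (t, x + g t) maps the graph of f onto the graph of f + g and is
  Lipschitz for rho_delta with constant 1 + C; its inverse is the shear by -g. A map that is
  Lipschitz with constant L turns a cover by balls of radii r n into one by balls of radii L r n,
  so it multiplies the \<beta>-dimensional Hausdorff measure by at most L powr \<beta> and cannot raise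
  the Hausdorff dimension.\<close>

definition ball_covers ::
  "'a set \<Rightarrow> ('a \<Rightarrow> 'a \<Rightarrow> real) \<Rightarrow> real \<Rightarrow> 'a set \<Rightarrow> ((nat \<Rightarrow> 'a) \<times> (nat \<Rightarrow> real)) set" where
  "ball_covers X \<rho> \<eta> G =
     {(x, r). (\<forall>n. x n \<in> X \<and> 0 \<le> r n \<and> r n \<le> \<eta>) \<and> G \<subseteq> (\<Union>n. rball \<rho> (x n) (r n))}"

lemma hausdorff_measure_eq_SUP_INF_ball_covers:
  "hausdorff_measure X \<rho> \<beta> G =
     (SUP \<eta>\<in>{0<..}. INF (x, r)\<in>ball_covers X \<rho> \<eta> G. \<Sum>n. ennreal ((2 * r n) powr \<beta>))"
  unfolding hausdorff_measure_def ball_covers_def by (simp add: case_prod_beta)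

lemma INF_cmult_ennreal_le:
  assumes "c > 0"
  shows "(INF i\<in>I. ennreal c * f i) \<le> ennreal c * (INF i\<in>I. f i)"
proof -
  have inverse: "ennreal c * ennreal (1 / c) = 1"
    using assms by (simp flip: ennreal_mult)
  have "ennreal (1 / c) * (INF i\<in>I. ennreal c * f i) \<le> (INF i\<in>I. f i)"
  proof (rule INF_greatest)
    fix i assume "i \<in> I"
    then have "ennreal (1 / c) * (INF i\<in>I. ennreal c * f i) \<le> ennreal (1 / c) * (ennreal c * f i)"
      by (intro mult_left_mono INF_lower) auto
    also have "\<dots> = f i"
      using inverse by (simp add: mult.assoc [symmetric] mult.commute)
    finally show "ennreal (1 / c) * (INF i\<in>I. ennreal c * f i) \<le> f i" .
  qed
  then have "ennreal c * (ennreal (1 / c) * (INF i\<in>I. ennreal c * f i)) \<le> ennreal c * (INF i\<in>I. f i)"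
    by (rule mult_left_mono) simp
  then show ?thesis
    using inverse by (simp add: mult.assoc [symmetric])
qed

lemma lipschitz_image_in_ball_covers:
  assumes lip: "\<forall>p\<in>X. \<forall>q\<in>X. \<rho> (\<Phi> p) (\<Phi> q) \<le> L * \<rho> p q"
    and "\<Phi> ` X \<subseteq> X" and "G \<subseteq> X" and "L > 0"
    and cover: "(x, r) \<in> ball_covers X \<rho> (\<eta> / L) G"
  shows "(\<Phi> \<circ> x, \<lambda>n. L * r n) \<in> ball_covers X \<rho> \<eta> (\<Phi> ` G)"
proof -
  have "\<Phi> ` G \<subseteq> (\<Union>n. rball \<rho> (\<Phi> (x n)) (L * r n))"
  proof
    fix z assume "z \<in> \<Phi> ` G"
    then obtain y where y: "y \<in> G" "z = \<Phi> y" by auto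
    with cover obtain n where "\<rho> (x n) y < r n"
      by (auto simp: ball_covers_def rball_def)
    moreover have "\<rho> (\<Phi> (x n)) (\<Phi> y) \<le> L * \<rho> (x n) y"
      using lip cover y \<open>G \<subseteq> X\<close> by (auto simp: ball_covers_def)
    ultimately have "\<rho> (\<Phi> (x n)) z < L * r n"
      using y \<open>L > 0\<close> by (smt (verit) mult_strict_left_mono)
    then show "z \<in> (\<Union>n. rball \<rho> (\<Phi> (x n)) (L * r n))"
      by (auto simp: rball_def)
  qed
  moreover have "L * r n \<le> \<eta>" for n
    using cover \<open>L > 0\<close> by (auto simp: ball_covers_def pos_le_divide_eq mult.commute)
  ultimately show ?thesis
    using cover assms(2,4) by (auto simp: ball_covers_def)
qed

lemma hausdorff_measure_lipschitz_image_le: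
  assumes lip: "\<forall>p\<in>X. \<forall>q\<in>X. \<rho> (\<Phi> p) (\<Phi> q) \<le> L * \<rho> p q"
    and "\<Phi> ` X \<subseteq> X" and "G \<subseteq> X" and "L > 0"
  shows "hausdorff_measure X \<rho> \<beta> (\<Phi> ` G) \<le> ennreal (L powr \<beta>) * hausdorff_measure X \<rho> \<beta> G"
proof -
  define S where "S G' \<eta> = (INF (x, r)\<in>ball_covers X \<rho> \<eta> G'. \<Sum>n. ennreal ((2 * r n) powr \<beta>))"
    for G' \<eta>
  have scaled_sum: "(\<Sum>n. ennreal ((2 * (L * r n)) powr \<beta>))
      = ennreal (L powr \<beta>) * (\<Sum>n. ennreal ((2 * r n) powr \<beta>))"
    if "(x, r) \<in> ball_covers X \<rho> \<eta> G" for x r \<eta>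
  proof -
    have "r n \<ge> 0" for n
      using that by (auto simp: ball_covers_def)
    then show ?thesis
      using \<open>L > 0\<close> by (simp add: powr_mult ennreal_mult mult.left_commute)
  qed
  have image_bound: "S (\<Phi> ` G) \<eta> \<le> ennreal (L powr \<beta>) * S G (\<eta> / L)" for \<eta>
  proof -
    have "S (\<Phi> ` G) \<eta> \<le> (INF (x, r)\<in>ball_covers X \<rho> (\<eta> / L) G.
                                \<Sum>n. ennreal ((2 * (L * r n)) powr \<beta>))"
      unfolding S_def
      by (rule INF_mono) (use lipschitz_image_in_ball_covers [OF assms] in force)
    also have "\<dots> = (INF (x, r)\<in>ball_covers X \<rho> (\<eta> / L) G.
                        ennreal (L powr \<beta>) * (\<Sum>n. ennreal ((2 * r n) powr \<beta>)))"
      by (rule INF_cong) (auto intro: scaled_sum)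
    also have "\<dots> \<le> ennreal (L powr \<beta>) * S G (\<eta> / L)"
      unfolding S_def case_prod_beta using \<open>L > 0\<close> by (intro INF_cmult_ennreal_le) simp
    finally show ?thesis .
  qed
  have measure_bound: "S G (\<eta> / L) \<le> hausdorff_measure X \<rho> \<beta> G" if "\<eta> > 0" for \<eta>
    unfolding hausdorff_measure_eq_SUP_INF_ball_covers S_def
    using that \<open>L > 0\<close> by (intro SUP_upper) auto
  show ?thesis
    unfolding hausdorff_measure_eq_SUP_INF_ball_covers [of X \<rho> \<beta> "\<Phi> ` G"] S_def [symmetric]
    using image_bound measure_bound by (intro SUP_least) (force intro: order_trans mult_left_mono)
qed

lemma hausdorff_dim_lipschitz_image_le:
  assumes "\<forall>p\<in>X. \<forall>q\<in>X. \<rho> (\<Phi> p) (\<Phi> q) \<le> L * \<rho> p q"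
    and "\<Phi> ` X \<subseteq> X" and "G \<subseteq> X" and "L > 0"
  shows "hausdorff_dim X \<rho> (\<Phi> ` G) \<le> hausdorff_dim X \<rho> G"
proof -
  have "hausdorff_measure X \<rho> \<beta> G > 0" if "hausdorff_measure X \<rho> \<beta> (\<Phi> ` G) > 0" for \<beta>
    using hausdorff_measure_lipschitz_image_le [OF assms, of \<beta>] that
    by (metis mult_zero_right not_gr_zero order_less_le_trans)
  then show ?thesis
    unfolding hausdorff_dim_def by (intro Sup_subset_mono image_mono) auto
qed

definition graph_shear :: "(real \<Rightarrow> 'v::real_normed_vector) \<Rightarrow> real \<times> 'v \<Rightarrow> real \<times> 'v" where
  "graph_shear h = (\<lambda>(t, x). (t, x + h t))"

lemma graph_on_add_eq_graph_shear_image: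
  "graph_on E (\<lambda>t. f t + h t) = graph_shear h ` graph_on E f"
  unfolding graph_on_def graph_shear_def by auto

lemma rho_delta_graph_shear_le:
  assumes "metric_on S \<delta>" and "C \<ge> 0"
    and h_lip: "\<forall>s\<in>S. \<forall>t\<in>S. norm (h t - h s) \<le> C * \<delta> t s"
    and "p \<in> S \<times> UNIV" and "q \<in> S \<times> UNIV"
  shows "rho_delta \<delta> (graph_shear h p) (graph_shear h q) \<le> (1 + C) * rho_delta \<delta> p q"
proof -
  obtain s x t y where pq: "p = (s, x)" "q = (t, y)" "s \<in> S" "t \<in> S"
    using assms(4,5) by auto
  define M where "M = rho_delta \<delta> p q"
  have "\<delta> s t \<ge> 0"
    using \<open>metric_on S \<delta>\<close> pq by (auto simp: metric_on_def)
  then have "\<delta> s t \<le> M" "norm (x - y) \<le> M" "M \<ge> 0"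
    by (auto simp: M_def rho_delta_def pq)
  have "norm (x + h s - (y + h t)) \<le> norm (x - y) + norm (h s - h t)"
    by (metis add_diff_add norm_triangle_ineq)
  also have "\<dots> \<le> M + C * M"
    using h_lip pq \<open>C \<ge> 0\<close> \<open>norm (x - y) \<le> M\<close> \<open>\<delta> s t \<le> M\<close>
    by (smt (verit) mult_left_mono)
  finally have "norm (x + h s - (y + h t)) \<le> (1 + C) * M"
    by (simp add: algebra_simps)
  moreover have "\<delta> s t \<le> (1 + C) * M"
    using \<open>\<delta> s t \<le> M\<close> \<open>M \<ge> 0\<close> \<open>C \<ge> 0\<close> by (simp add: distrib_right add_increasing2)
  moreover have "rho_delta \<delta> (graph_shear h p) (graph_shear h q) = max (\<delta> s t) (norm (x + h s - (y + h t)))"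
    by (simp add: rho_delta_def graph_shear_def pq)
  ultimately show ?thesis
    by (simp add: M_def)
qed

lemma hausdorff_dim_graph_add_lipschitz_le:
  assumes "metric_on S \<delta>" and "C \<ge> 0"
    and "\<forall>s\<in>S. \<forall>t\<in>S. norm (h t - h s) \<le> C * \<delta> t s"
    and "E \<subseteq> S"
  shows "hausdorff_dim (S \<times> UNIV) (rho_delta \<delta>) (graph_on E (\<lambda>t. f t + h t))
       \<le> hausdorff_dim (S \<times> UNIV) (rho_delta \<delta>) (graph_on E f)"
  unfolding graph_on_add_eq_graph_shear_image
proof (rule hausdorff_dim_lipschitz_image_le)
  show "\<forall>p\<in>S \<times> UNIV. \<forall>q\<in>S \<times> UNIV.
          rho_delta \<delta> (graph_shear h p) (graph_shear h q) \<le> (1 + C) * rho_delta \<delta> p q"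
    using rho_delta_graph_shear_le [OF assms(1-3)] by blast
  show "graph_shear h ` (S \<times> UNIV) \<subseteq> S \<times> UNIV"
    by (auto simp: graph_shear_def)
  show "graph_on E f \<subseteq> S \<times> UNIV"
    using \<open>E \<subseteq> S\<close> by (auto simp: graph_on_def)
  show "1 + C > 0"
    using \<open>C \<ge> 0\<close> by simp
qed

theorem lemma3p8:
  fixes a b :: real and \<delta> :: "real \<Rightarrow> real \<Rightarrow> real"
    and f g :: "real \<Rightarrow> 'v::euclidean_space" and C :: real and E :: "real set"
  assumes "metric_on {a..b} \<delta>"
    and "f \<in> borel_measurable (restrict_space borel {a..b})"
    and "C > 0"
    and "\<forall>s\<in>{a..b}. \<forall>t\<in>{a..b}. norm (g t - g s) \<le> C * \<delta> t s"
    and "E \<in> sets borel" and "E \<subseteq> {a..b}"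
  shows "hausdorff_dim ({a..b} \<times> UNIV) (rho_delta \<delta>) (graph_on E (\<lambda>t. f t + g t))
         = hausdorff_dim ({a..b} \<times> UNIV) (rho_delta \<delta>) (graph_on E f)"
proof (rule antisym)
  have "C \<ge> 0"
    using \<open>C > 0\<close> by simp
  then show "hausdorff_dim ({a..b} \<times> UNIV) (rho_delta \<delta>) (graph_on E (\<lambda>t. f t + g t))
      \<le> hausdorff_dim ({a..b} \<times> UNIV) (rho_delta \<delta>) (graph_on E f)"
    by (rule hausdorff_dim_graph_add_lipschitz_le [OF assms(1) _ assms(4,6)])
  have "\<forall>s\<in>{a..b}. \<forall>t\<in>{a..b}. norm (- g t - - g s) \<le> C * \<delta> t s"
    using assms(4) by (simp add: norm_minus_commute)
  from hausdorff_dim_graph_add_lipschitz_le [OF assms(1) \<open>C \<ge> 0\<close> this assms(6),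
      of "\<lambda>t. f t + g t"]
  show "hausdorff_dim ({a..b} \<times> UNIV) (rho_delta \<delta>) (graph_on E f)
      \<le> hausdorff_dim ({a..b} \<times> UNIV) (rho_delta \<delta>) (graph_on E (\<lambda>t. f t + g t))"
    by simp
qed

end
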